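(* Assume $V$ satisfies Assumptions A1 and A2, let $\delta$ satisfy the step-size condition (S), and let $c=(1-\gamma\delta/2)/(1-\gamma\delta)$. Realize the underdamped Langevin algorithm through an $r$-dimensional standard Brownian motion $B$ via $\eta_k=(B((k+1)\delta)-B(k\delta))/\sqrt\delta$, let $\tau_k=(1-\gamma\delta)\rho_k-\delta\nabla V(\xi_k)$, and for $t\in[k\delta,(k+1)\delta]$ let $R_k(t)=\tau_k+\sqrt{2\gamma}\,(B(t)-B(k\delta))$ (so $\rho_{k+1}=R_k((k+1)\delta)$). Fix an integer $l>0$. Then there is a constant $C_2=C_2(l,\delta)>0$ such that for all $k\ge0$ and all $t\in[k\delta,(k+1)\delta]$, \[ \mathbb{E}\left[\{\Gamma_c(\xi_{k+1},R_k(t))\}^l\right]\le\mathbb{E}\left[\{\Gamma_c(\xi_{k+1},\tau_k)\}^l\right]+C_2\sum_{i=0}^{l-1}(t-k\delta)^{l-i}\,\mathbb{E}\left[\{\Gamma_c(\xi_{k+1},\tau_k)\}^i\right]. \]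
   Context: Fix integers $r\ge1$ and a constant $\gamma>0$. A map has polynomial growth if $\Vert\phi(x)\Vert\le C(1+\Vert x\Vert^m)$ for some $C>0$, integer $m\ge0$ and all $x$; $\mathscr{C}^\infty_{poly}$ denotes infinitely differentiable maps with the map and all derivatives of polynomial growth. Norms of matrices are operator norms. Assumption A1: (a) $V(x)\ge0$ for all $x\in\mathbb{R}^r$; (b) $\Vert\nabla^2V(x)\Vert\le\nu$ for some constant $\nu>0$ and all $x$; (c) $V\in\mathscr{C}^\infty_{poly}$. Assumption A2: there exist constants $\alpha>0$ and $0<\beta<1$ such that for all $x\in\mathbb{R}^r$, $\frac12\langle\nabla V(x),x\rangle\ge\beta V(x)+\gamma^2C_\beta\Vert x\Vert^2-\alpha$, where $C_\beta=\frac{\beta(2-\beta)}{8(1-\beta)}$. Step-size condition (S): $0<\delta\le\min\{1/\gamma,\ \gamma/(2\nu),\ (D+1-\sqrt{D^2+1})/\gamma\}$ with $D=\gamma^4C_\beta/\nu^2$. Underdamped Langevin algorithm: $\xi_{k+1}=\xi_k+\delta\rho_k$, $\rho_{k+1}=(1-\gamma\delta)\rho_k-\delta\nabla V(\xi_k)+\sqrt{2\gamma\delta}\,\eta_k$, with deterministic initial values $\xi_0,\rho_0$. For $c>1$ and $x,y\in\mathbb{R}^r$, $\Gamma_c(x,y)=\frac{\gamma^2}{4}\Vert x\Vert^2+V(x)+\frac{\gamma}{2}\langle x,y\rangle+\frac c2\Vert y\Vert^2+1$. *)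

theory Defs
  imports "HOL-Probability.Probability"
begin

definition poly_growth :: "(real^'n \<Rightarrow> real) \<Rightarrow> bool" where
  "poly_growth f \<longleftrightarrow> (\<exists>C>0. \<exists>m::nat. \<forall>x. \<bar>f x\<bar> \<le> C * (1 + norm x ^ m))"

definition partial_dir :: "'n::finite \<Rightarrow> (real^'n \<Rightarrow> real) \<Rightarrow> real^'n \<Rightarrow> real" where
  "partial_dir i f x = deriv (\<lambda>s. f (x + s *\<^sub>R axis i 1)) 0"

fun iter_partial :: "'n::finite list \<Rightarrow> (real^'n \<Rightarrow> real) \<Rightarrow> real^'n \<Rightarrow> real" where
  "iter_partial [] f = f"
| "iter_partial (i # is) f = partial_dir i (iter_partial is f)"

text \<open>f is infinitely (Frechet) differentiable and f and all its derivatives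
  (equivalently all iterated partial derivatives) have polynomial growth.\<close>
definition C_inf_poly :: "(real^'n::finite \<Rightarrow> real) \<Rightarrow> bool" where
  "C_inf_poly f \<longleftrightarrow>
     (\<forall>is. \<forall>x. iter_partial is f differentiable (at x)) \<and>
     (\<forall>is. poly_growth (iter_partial is f))"

definition C_beta :: "real \<Rightarrow> real" where
  "C_beta \<beta> = \<beta> * (2 - \<beta>) / (8 * (1 - \<beta>))"

definition D_const :: "real \<Rightarrow> real \<Rightarrow> real \<Rightarrow> real" where
  "D_const \<gamma> \<nu> \<beta> = \<gamma> ^ 4 * C_beta \<beta> / \<nu>\<^sup>2"

definition Gamma_c :: "(real^'n \<Rightarrow> real) \<Rightarrow> real \<Rightarrow> real \<Rightarrow> real^'n \<Rightarrow> real^'n \<Rightarrow> real" where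
  "Gamma_c V \<gamma> c x y =
     \<gamma>\<^sup>2 / 4 * (norm x)\<^sup>2 + V x + \<gamma> / 2 * (x \<bullet> y) + c / 2 * (norm y)\<^sup>2 + 1"

definition gauss_density :: "real \<Rightarrow> real^'n::finite \<Rightarrow> real" where
  "gauss_density s x = (\<Prod>i\<in>UNIV. normal_density 0 (sqrt s) (x $ i))"

definition std_brownian_motion :: "'a measure \<Rightarrow> (real \<Rightarrow> 'a \<Rightarrow> real^'n::finite) \<Rightarrow> bool" where
  "std_brownian_motion M B \<longleftrightarrow>
     prob_space M \<and>
     (\<forall>t\<ge>0. B t \<in> borel_measurable M) \<and>
     (AE \<omega> in M. B 0 \<omega> = 0) \<and>
     (AE \<omega> in M. continuous_on {0..} (\<lambda>t. B t \<omega>)) \<and>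
     (\<forall>s t. 0 \<le> s \<and> s < t \<longrightarrow>
        distributed M lborel (\<lambda>\<omega>. B t \<omega> - B s \<omega>) (\<lambda>x. ennreal (gauss_density (t - s) x))) \<and>
     (\<forall>(ts::nat \<Rightarrow> real) n. 0 \<le> ts 0 \<and> (\<forall>i<n. ts i \<le> ts (Suc i)) \<longrightarrow>
        prob_space.indep_vars M (\<lambda>_. borel) (\<lambda>i \<omega>. B (ts (Suc i)) \<omega> - B (ts i) \<omega>) {..<n})"

fun ula :: "(real^'n \<Rightarrow> real^'n) \<Rightarrow> real \<Rightarrow> real \<Rightarrow> real^'n \<Rightarrow> real^'n
            \<Rightarrow> (real \<Rightarrow> 'a \<Rightarrow> real^'n) \<Rightarrow> nat \<Rightarrow> 'a \<Rightarrow> (real^'n) \<times> (real^'n)" where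
  "ula gV \<gamma> \<delta> x0 p0 B 0 \<omega> = (x0, p0)"
| "ula gV \<gamma> \<delta> x0 p0 B (Suc k) \<omega> =
     (let xk = fst (ula gV \<gamma> \<delta> x0 p0 B k \<omega>);
          pk = snd (ula gV \<gamma> \<delta> x0 p0 B k \<omega>);
          \<eta> = (1 / sqrt \<delta>) *\<^sub>R (B ((real k + 1) * \<delta>) \<omega> - B (real k * \<delta>) \<omega>)
      in (xk + \<delta> *\<^sub>R pk,
          (1 - \<gamma> * \<delta>) *\<^sub>R pk - \<delta> *\<^sub>R gV xk + sqrt (2 * \<gamma> * \<delta>) *\<^sub>R \<eta>))"

end

theory Submission
  imports Defs
begin

text \<open>Write \<open>G = Gamma_c(\<xi>, \<tau>)\<close>, \<open>u = (\<gamma>/2) \<xi> + c \<tau>\<close> and \<open>s = sqrt(2 \<gamma>)\<close>. Then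
  \<open>Gamma_c(\<xi>, \<tau> + s w) = G + s \<langle>u, w\<rangle> + (c s\<^sup>2 / 2) |w|\<^sup>2\<close>, where \<open>G \<ge> 1\<close> and
  \<open>|u|\<^sup>2 \<le> (8 + 12 c\<^sup>2) G\<close> because \<open>c \<ge> 1\<close>. The increment \<open>B(t) - B(k \<delta>)\<close> is \<open>N(0, h I)\<close> with
  \<open>h = t - k \<delta>\<close> and is independent of the state \<open>(\<xi>(k+1), \<tau>(k))\<close>, so by Fubini it suffices to
  bound a Gaussian integral over \<open>w\<close> for a fixed state. As the Gaussian density is even,
  \<open>(G + q + a)^l\<close> with \<open>a = s \<langle>u, w\<rangle>\<close> and \<open>q = (c s\<^sup>2 / 2) |w|\<^sup>2\<close> may be replaced by its
  average with \<open>(G + q - a)^l\<close>. This removes the odd powers of \<open>a\<close>, which would otherwise produce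
  half-integer powers of \<open>G\<close>; since \<open>a\<^sup>2 \<le> G L |w|\<^sup>2\<close> and \<open>q \<le> L |w|\<^sup>2\<close>, the average is at most
  \<open>G^l + 4^l \<Sum>(i<l) G^i (L |w|\<^sup>2)^(l-i)\<close>, and the Gaussian moments
  \<open>E |W|^(2j) \<le> (4 h)^j j! 2^(r/2)\<close> give the claim.\<close>

section \<open>Elementary inequalities\<close>

definition mixed_power_sum :: "real \<Rightarrow> real \<Rightarrow> nat \<Rightarrow> real" where
  "mixed_power_sum G e l = (\<Sum>i<l. G ^ i * e ^ (l - i))"

lemma mixed_power_sum_Suc: "mixed_power_sum G e (Suc l) = e * (G ^ l + mixed_power_sum G e l)"
proof -
  have "(\<Sum>i<l. G ^ i * e ^ (Suc l - i)) = e * mixed_power_sum G e l"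
    unfolding mixed_power_sum_def sum_distrib_left by (intro sum.cong) (auto simp: Suc_diff_le)
  then show ?thesis by (simp add: mixed_power_sum_def algebra_simps)
qed

lemma mixed_power_sum_nonneg: "G \<ge> 0 \<Longrightarrow> e \<ge> 0 \<Longrightarrow> mixed_power_sum G e l \<ge> 0"
  unfolding mixed_power_sum_def by (intro sum_nonneg) auto

lemma mixed_power_sum_mult_le:
  assumes "G \<ge> 0" "e \<ge> 0"
  shows "G * mixed_power_sum G e l \<le> mixed_power_sum G e (Suc l)"
    and "e * mixed_power_sum G e l \<le> mixed_power_sum G e (Suc l)"
    and "e * G ^ l \<le> mixed_power_sum G e (Suc l)"
proof -
  have "mixed_power_sum G e (Suc l) = e ^ Suc l + G * mixed_power_sum G e l"
    unfolding mixed_power_sum_def sum_distrib_left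
    by (subst sum.lessThan_Suc_shift) (simp add: algebra_simps)
  then show "G * mixed_power_sum G e l \<le> mixed_power_sum G e (Suc l)" using assms by simp
  show "e * mixed_power_sum G e l \<le> mixed_power_sum G e (Suc l)"
    and "e * G ^ l \<le> mixed_power_sum G e (Suc l)"
    using assms mixed_power_sum_nonneg[OF assms, of l]
    by (simp_all add: mixed_power_sum_Suc algebra_simps)
qed

text \<open>Let \<open>E\<^sub>l, O\<^sub>l\<close> be the even part \<open>((P+a)^l + (P-a)^l)/2\<close> and the odd part
  \<open>a((P+a)^l - (P-a)^l)/2\<close>; then \<open>E\<^sub>l\<^sub>+\<^sub>1 = P E\<^sub>l + O\<^sub>l\<close> and \<open>O\<^sub>l\<^sub>+\<^sub>1 = P O\<^sub>l + a\<^sup>2 E\<^sub>l\<close>.\<close>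

lemma even_part_bound_step:
  fixes G e P p r :: real
  defines "T \<equiv> mixed_power_sum G e"
  assumes "G \<ge> 0" "e \<ge> 0" "0 \<le> P" "P \<le> G + e"
    and p: "p \<le> G ^ l + 4 ^ l * T l" and r: "r \<le> 4 ^ l * T (Suc l)"
  shows "P * p + r \<le> G ^ Suc l + 4 ^ Suc l * T (Suc l)"
proof -
  note T = mixed_power_sum_mult_le[OF \<open>G \<ge> 0\<close> \<open>e \<ge> 0\<close>, of l, folded T_def]
  have "T l \<ge> 0" "T (Suc l) \<ge> 0" using mixed_power_sum_nonneg assms by auto
  have "P * p \<le> P * (G ^ l + 4 ^ l * T l)"
    using p \<open>0 \<le> P\<close> by (rule mult_left_mono)
  also have "\<dots> \<le> (G + e) * (G ^ l + 4 ^ l * T l)"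
    using assms \<open>T l \<ge> 0\<close> by (intro mult_right_mono) auto
  also have "\<dots> = G ^ Suc l + e * G ^ l + 4 ^ l * (G * T l) + 4 ^ l * (e * T l)"
    by (simp add: algebra_simps)
  also have "\<dots> \<le> G ^ Suc l + T (Suc l) + 4 ^ l * T (Suc l) + 4 ^ l * T (Suc l)"
    using T by (intro add_mono mult_left_mono) auto
  finally have "P * p \<le> G ^ Suc l + T (Suc l) + 2 * 4 ^ l * T (Suc l)" by (simp add: algebra_simps)
  moreover have "T (Suc l) \<le> 4 ^ l * T (Suc l)"
    using \<open>T (Suc l) \<ge> 0\<close> by (simp add: mult_le_cancel_right1)
  ultimately show ?thesis using r by simp
qed

lemma odd_part_bound_step:
  fixes G e P p r a :: real
  defines "T \<equiv> mixed_power_sum G e"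
  assumes "G \<ge> 0" "e \<ge> 0" "0 \<le> P" "P \<le> G + e" "a\<^sup>2 \<le> G * e"
    and p: "p \<le> G ^ l + 4 ^ l * T l" and r: "r \<le> 4 ^ l * T (Suc l)"
  shows "P * r + a\<^sup>2 * p \<le> 4 ^ Suc l * T (Suc (Suc l))"
proof -
  note T = mixed_power_sum_mult_le[OF \<open>G \<ge> 0\<close> \<open>e \<ge> 0\<close>, folded T_def]
  have T0: "T l \<ge> 0" "T (Suc l) \<ge> 0" "T (Suc (Suc l)) \<ge> 0"
    using mixed_power_sum_nonneg assms by auto
  have "P * r \<le> P * (4 ^ l * T (Suc l))"
    using r \<open>0 \<le> P\<close> by (rule mult_left_mono)
  also have "\<dots> \<le> (G + e) * (4 ^ l * T (Suc l))"
    using assms T0 by (intro mult_right_mono) auto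
  also have "\<dots> = 4 ^ l * (G * T (Suc l)) + 4 ^ l * (e * T (Suc l))"
    by (simp add: algebra_simps)
  also have "\<dots> \<le> 4 ^ l * T (Suc (Suc l)) + 4 ^ l * T (Suc (Suc l))"
    using T(1,2)[of "Suc l"] by (intro add_mono mult_left_mono) auto
  finally have Pr: "P * r \<le> 2 * 4 ^ l * T (Suc (Suc l))" by (simp add: mult_ac)
  have "e * (G * T l) \<le> T (Suc (Suc l))"
    using T(1)[of l] T(2)[of "Suc l"] \<open>e \<ge> 0\<close> by (meson mult_left_mono order_trans)
  have "a\<^sup>2 * p \<le> a\<^sup>2 * (G ^ l + 4 ^ l * T l)"
    using p by (intro mult_left_mono) auto
  also have "\<dots> \<le> (G * e) * (G ^ l + 4 ^ l * T l)"
    using assms T0 by (intro mult_right_mono) auto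
  also have "\<dots> = e * G ^ Suc l + 4 ^ l * (e * (G * T l))"
    by (simp add: algebra_simps)
  also have "\<dots> \<le> T (Suc (Suc l)) + 4 ^ l * T (Suc (Suc l))"
    using T(3)[of "Suc l"] \<open>e * (G * T l) \<le> T (Suc (Suc l))\<close> by (intro add_mono mult_left_mono) auto
  finally show ?thesis
    using Pr T0 mult_le_cancel_right1[of "T (Suc (Suc l))" "4 ^ l"] by simp
qed

lemma symmetric_power_le_mixed_power_sum:
  fixes G e q a :: real
  assumes "G \<ge> 0" "e \<ge> 0" "0 \<le> q" "q \<le> e" "a\<^sup>2 \<le> G * e"
  shows "((G + q + a) ^ l + (G + q - a) ^ l) / 2 \<le> G ^ l + 4 ^ l * mixed_power_sum G e l"
proof -
  define P where "P = G + q"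
  have "((P + a) ^ l + (P - a) ^ l) / 2 \<le> G ^ l + 4 ^ l * mixed_power_sum G e l \<and>
        a * ((P + a) ^ l - (P - a) ^ l) / 2 \<le> 4 ^ l * mixed_power_sum G e (Suc l)"
  proof (induction l)
    case 0
    then show ?case using mixed_power_sum_nonneg[of G e 1] assms by (simp add: mixed_power_sum_def)
  next
    case (Suc l)
    have E: "((P + a) ^ Suc l + (P - a) ^ Suc l) / 2
        = P * (((P + a) ^ l + (P - a) ^ l) / 2) + a * ((P + a) ^ l - (P - a) ^ l) / 2"
      and O: "a * ((P + a) ^ Suc l - (P - a) ^ Suc l) / 2
        = P * (a * ((P + a) ^ l - (P - a) ^ l) / 2) + a\<^sup>2 * (((P + a) ^ l + (P - a) ^ l) / 2)"
      by (simp_all add: field_simps power2_eq_square)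
    show ?case
      unfolding E O using Suc assms
      by (intro conjI even_part_bound_step odd_part_bound_step) (auto simp: P_def)
  qed
  then show ?thesis by (simp add: P_def)
qed

lemma power_le_fact_mult_exp:
  fixes y :: real
  assumes "y \<ge> 0"
  shows "y ^ n \<le> fact n * exp y"
proof -
  have "y ^ n /\<^sub>R fact n \<le> (\<Sum>i. y ^ i /\<^sub>R fact i)"
    using assms exp_converges[of y]
    by (intro sum_le_suminf[where I = "{n}", simplified]) (auto simp: sums_iff)
  also have "\<dots> = exp y"
    using exp_converges[of y] by (simp add: sums_iff)
  finally show ?thesis by (simp add: field_simps)
qed

lemma sum_moment_coefficients_le:
  fixes G L h K :: real
  assumes "G \<ge> 0" "L \<ge> 0" "h \<ge> 0" "K \<ge> 0"
  shows "(\<Sum>i<l. 4 ^ l * G ^ i * L ^ (l - i) * ((4 * h) ^ (l - i) * fact (l - i) * K))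
           \<le> 4 ^ l * 4 ^ l * (1 + L) ^ l * fact l * K * (\<Sum>i<l. h ^ (l - i) * G ^ i)"
  unfolding sum_distrib_left
proof (rule sum_mono)
  fix i assume "i \<in> {..<l}"
  have "L ^ (l - i) \<le> (1 + L) ^ (l - i)"
    using \<open>L \<ge> 0\<close> by (intro power_mono) auto
  also have "\<dots> \<le> (1 + L) ^ l"
    using \<open>L \<ge> 0\<close> by (intro power_increasing) auto
  finally have "L ^ (l - i) * (4 ^ (l - i) * fact (l - i)) \<le> (1 + L) ^ l * (4 ^ l * fact l)"
    using \<open>L \<ge> 0\<close> by (intro mult_mono power_increasing fact_mono) auto
  then have "(4 ^ l * h ^ (l - i) * G ^ i * K) * (L ^ (l - i) * (4 ^ (l - i) * fact (l - i)))
      \<le> (4 ^ l * h ^ (l - i) * G ^ i * K) * ((1 + L) ^ l * (4 ^ l * fact l))"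
    using assms by (intro mult_left_mono) auto
  then show "4 ^ l * G ^ i * L ^ (l - i) * ((4 * h) ^ (l - i) * fact (l - i) * K)
      \<le> 4 ^ l * 4 ^ l * (1 + L) ^ l * fact l * K * (h ^ (l - i) * G ^ i)"
    unfolding power_mult_distrib by (simp only: ac_simps)
qed

section \<open>The function Gamma_c\<close>

lemma Gamma_c_shift:
  "Gamma_c V \<gamma> c x (y + s *\<^sub>R w)
     = Gamma_c V \<gamma> c x y + s * (((\<gamma> / 2) *\<^sub>R x + c *\<^sub>R y) \<bullet> w) + c * s\<^sup>2 / 2 * (norm w)\<^sup>2"
  unfolding Gamma_c_def power2_norm_eq_inner
  by (simp add: inner_add_left inner_add_right algebra_simps power2_eq_square inner_commute)

lemma Gamma_c_ge_quadratic:
  fixes x y :: "real^'n"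
  assumes "\<gamma> > 0" "c \<ge> 1" "V x \<ge> 0"
  shows "\<gamma>\<^sup>2 / 16 * (norm x)\<^sup>2 + (norm y)\<^sup>2 / 6 + 1 \<le> Gamma_c V \<gamma> c x y"
proof -
  have "- (x \<bullet> y) \<le> norm x * norm y"
    using Cauchy_Schwarz_ineq2[of x y] by linarith
  then have "- (\<gamma> / 2 * (x \<bullet> y)) \<le> \<gamma> / 2 * (norm x * norm y)"
    using mult_left_mono[of "- (x \<bullet> y)" "norm x * norm y" "\<gamma> / 2"] \<open>\<gamma> > 0\<close> by simp
  also have "\<dots> \<le> 3 * \<gamma>\<^sup>2 / 16 * (norm x)\<^sup>2 + (norm y)\<^sup>2 / 3"
    using zero_le_power2[of "3 * \<gamma> * norm x - 4 * norm y"] by (simp add: power2_eq_square algebra_simps)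
  finally have "- (\<gamma> / 2 * (x \<bullet> y)) \<le> 3 * \<gamma>\<^sup>2 / 16 * (norm x)\<^sup>2 + (norm y)\<^sup>2 / 3" .
  moreover have "(norm y)\<^sup>2 / 2 \<le> c / 2 * (norm y)\<^sup>2"
    using mult_right_mono[of 1 c "(norm y)\<^sup>2"] \<open>c \<ge> 1\<close> by simp
  ultimately show ?thesis
    using \<open>V x \<ge> 0\<close> unfolding Gamma_c_def by linarith
qed

lemma Gamma_c_ge_1:
  assumes "\<gamma> > 0" "c \<ge> 1" "V x \<ge> 0"
  shows "1 \<le> Gamma_c V \<gamma> c x y"
proof -
  have "0 \<le> \<gamma>\<^sup>2 / 16 * (norm x)\<^sup>2 + (norm y)\<^sup>2 / 6"
    by simp
  then show ?thesis
    using Gamma_c_ge_quadratic[of \<gamma> c V x y] assms by linarith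
qed

text \<open>The vector \<open>(\<gamma>/2) x + c y\<close> is the gradient of \<open>Gamma_c\<close> in its second argument.\<close>

lemma norm_Gamma_c_gradient_le:
  fixes x y :: "real^'n"
  assumes "\<gamma> > 0" "c \<ge> 1" "V x \<ge> 0"
  shows "(norm ((\<gamma> / 2) *\<^sub>R x + c *\<^sub>R y))\<^sup>2 \<le> (8 + 12 * c\<^sup>2) * Gamma_c V \<gamma> c x y"
proof -
  have "\<gamma> * c * (x \<bullet> y) \<le> \<gamma> * c * (norm x * norm y)"
    using Cauchy_Schwarz_ineq2[of x y] assms by (intro mult_left_mono) auto
  moreover have "(norm ((\<gamma> / 2) *\<^sub>R x + c *\<^sub>R y))\<^sup>2
      = \<gamma>\<^sup>2 / 4 * (norm x)\<^sup>2 + \<gamma> * c * (x \<bullet> y) + c\<^sup>2 * (norm y)\<^sup>2"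
    unfolding power2_norm_eq_inner
    by (simp add: inner_add_left inner_add_right inner_commute algebra_simps power2_eq_square)
  ultimately have "(norm ((\<gamma> / 2) *\<^sub>R x + c *\<^sub>R y))\<^sup>2 \<le> \<gamma>\<^sup>2 / 2 * (norm x)\<^sup>2 + 2 * c\<^sup>2 * (norm y)\<^sup>2"
    using zero_le_power2[of "\<gamma> * norm x / 2 - c * norm y"]
    by (simp add: algebra_simps power2_eq_square)
  also have "\<dots> \<le> (8 + 12 * c\<^sup>2) * (\<gamma>\<^sup>2 / 16 * (norm x)\<^sup>2 + (norm y)\<^sup>2 / 6)"
  proof -
    have "(8 + 12 * c\<^sup>2) * (\<gamma>\<^sup>2 / 16 * (norm x)\<^sup>2 + (norm y)\<^sup>2 / 6)
        = \<gamma>\<^sup>2 / 2 * (norm x)\<^sup>2 + 2 * c\<^sup>2 * (norm y)\<^sup>2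
          + (12 * c\<^sup>2 * (\<gamma>\<^sup>2 / 16 * (norm x)\<^sup>2) + 8 * ((norm y)\<^sup>2 / 6))"
      by (simp add: algebra_simps)
    moreover have "0 \<le> 12 * c\<^sup>2 * (\<gamma>\<^sup>2 / 16 * (norm x)\<^sup>2) + 8 * ((norm y)\<^sup>2 / 6)"
      by simp
    ultimately show ?thesis by linarith
  qed
  also have "\<dots> \<le> (8 + 12 * c\<^sup>2) * Gamma_c V \<gamma> c x y"
    using Gamma_c_ge_quadratic[of \<gamma> c V x y] assms by (intro mult_left_mono) auto
  finally show ?thesis .
qed

lemma Gamma_c_shift_symmetric_le:
  fixes x y w :: "real^'n" and s :: real
  assumes "\<gamma> > 0" "c \<ge> 1" "V x \<ge> 0"
  defines "G \<equiv> Gamma_c V \<gamma> c x y" and "L \<equiv> s\<^sup>2 * (8 + 12 * c\<^sup>2) + c * s\<^sup>2 / 2"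
  shows "(Gamma_c V \<gamma> c x (y + s *\<^sub>R w) ^ l + Gamma_c V \<gamma> c x (y + s *\<^sub>R (- w)) ^ l) / 2
           \<le> G ^ l + (\<Sum>i<l. 4 ^ l * G ^ i * L ^ (l - i) * norm w ^ (2 * (l - i)))"
proof -
  define u where "u = (\<gamma> / 2) *\<^sub>R x + c *\<^sub>R y"
  define a where "a = s * (u \<bullet> w)"
  define q where "q = c * s\<^sup>2 / 2 * (norm w)\<^sup>2"
  define e where "e = L * (norm w)\<^sup>2"
  have "G \<ge> 1" using Gamma_c_ge_1 assms unfolding G_def by blast
  have "a\<^sup>2 \<le> s\<^sup>2 * ((norm u)\<^sup>2 * (norm w)\<^sup>2)"
    using power_mono[OF Cauchy_Schwarz_ineq2[of u w], of 2]
    by (auto simp: a_def power_mult_distrib intro: mult_left_mono)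
  also have "\<dots> \<le> s\<^sup>2 * (((8 + 12 * c\<^sup>2) * G) * (norm w)\<^sup>2)"
    using norm_Gamma_c_gradient_le[of \<gamma> c V x y] assms unfolding u_def G_def
    by (intro mult_left_mono mult_right_mono) auto
  also have "\<dots> \<le> G * e"
    using \<open>G \<ge> 1\<close> \<open>c \<ge> 1\<close> mult_right_mono[of "s\<^sup>2 * (8 + 12 * c\<^sup>2)" L "G * (norm w)\<^sup>2"]
    by (simp add: e_def L_def algebra_simps)
  finally have "a\<^sup>2 \<le> G * e" .
  moreover have "0 \<le> q" "q \<le> e" "0 \<le> e"
    using \<open>c \<ge> 1\<close> by (simp_all add: q_def e_def L_def algebra_simps)
  ultimately have "((G + q + a) ^ l + (G + q - a) ^ l) / 2 \<le> G ^ l + 4 ^ l * mixed_power_sum G e l"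
    using \<open>G \<ge> 1\<close> by (intro symmetric_power_le_mixed_power_sum) auto
  moreover have "Gamma_c V \<gamma> c x (y + s *\<^sub>R w) = G + q + a" "Gamma_c V \<gamma> c x (y + s *\<^sub>R (- w)) = G + q - a"
    unfolding G_def q_def a_def u_def Gamma_c_shift by simp_all
  moreover have "4 ^ l * mixed_power_sum G e l = (\<Sum>i<l. 4 ^ l * G ^ i * L ^ (l - i) * norm w ^ (2 * (l - i)))"
    unfolding mixed_power_sum_def e_def sum_distrib_left
    by (intro sum.cong) (simp_all add: power_mult_distrib power_mult[symmetric] mult_ac)
  ultimately show ?thesis by simp
qed

section \<open>Gaussian integrals\<close>

lemma gauss_density_nonneg: "0 \<le> gauss_density s x"
  unfolding gauss_density_def by (intro prod_nonneg) (simp add: normal_density_nonneg)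

lemma gauss_density_uminus: "gauss_density s (- x) = gauss_density s x"
  unfolding gauss_density_def normal_density_def by simp

lemma borel_measurable_gauss_density [measurable]: "gauss_density s \<in> borel_measurable borel"
  unfolding gauss_density_def normal_density_def by measurable

lemma normal_density_mult_exp:
  assumes "s > 0"
  shows "normal_density 0 (sqrt s) x * exp (x\<^sup>2 / (4 * s)) = sqrt 2 * normal_density 0 (sqrt (2 * s)) x"
proof -
  have "exp (- (x\<^sup>2) / (2 * s)) * exp (x\<^sup>2 / (4 * s)) = exp (- (x\<^sup>2) / (4 * s))"
    by (simp add: exp_add[symmetric] field_simps)
  moreover have "sqrt (pi * (s * 4)) = sqrt 2 * sqrt (pi * (s * 2))"
    by (simp add: real_sqrt_mult[symmetric] algebra_simps)
  ultimately show ?thesis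
    using assms unfolding normal_density_def
    by (simp add: power2_eq_square[symmetric] field_simps exp_add[symmetric])
qed

text \<open>Multiplying by \<open>exp (|x|\<^sup>2 / (4 s))\<close> turns the \<open>N(0, s I)\<close> density into a multiple of the
  \<open>N(0, 2 s I)\<close> density; this is how all even moments are bounded at once.\<close>

lemma gauss_density_mult_exp:
  fixes x :: "real^'n"
  assumes "s > 0"
  shows "gauss_density s x * exp ((norm x)\<^sup>2 / (4 * s)) = sqrt 2 ^ CARD('n) * gauss_density (2 * s) x"
proof -
  have "exp ((norm x)\<^sup>2 / (4 * s)) = (\<Prod>i\<in>UNIV. exp ((x $ i)\<^sup>2 / (4 * s)))"
    unfolding power2_norm_eq_inner inner_vec_def
    by (simp add: power2_eq_square sum_divide_distrib exp_sum)
  then show ?thesis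
    unfolding gauss_density_def
    by (simp add: prod.distrib[symmetric] normal_density_mult_exp[OF assms]) (simp add: prod.distrib)
qed

lemma gauss_density_moment_le:
  fixes h :: real
  assumes "h > 0" and normalized: "(\<integral>\<^sup>+x. ennreal (gauss_density (2 * h) (x :: real^'n)) \<partial>lborel) = 1"
  shows "(\<integral>\<^sup>+x. ennreal (gauss_density h (x :: real^'n) * norm x ^ (2 * j)) \<partial>lborel)
           \<le> ennreal ((4 * h) ^ j * fact j * sqrt 2 ^ CARD('n))"
proof -
  define C where "C = (4 * h) ^ j * fact j * sqrt 2 ^ CARD('n)"
  have "gauss_density h x * norm x ^ (2 * j) \<le> C * gauss_density (2 * h) x" for x :: "real^'n"
  proof -
    have "norm x ^ (2 * j) = (4 * h) ^ j * ((norm x)\<^sup>2 / (4 * h)) ^ j"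
      using \<open>h > 0\<close> by (simp add: power_mult power_divide)
    also have "\<dots> \<le> (4 * h) ^ j * (fact j * exp ((norm x)\<^sup>2 / (4 * h)))"
      using \<open>h > 0\<close> by (intro mult_left_mono power_le_fact_mult_exp) auto
    finally have "gauss_density h x * norm x ^ (2 * j)
        \<le> gauss_density h x * ((4 * h) ^ j * (fact j * exp ((norm x)\<^sup>2 / (4 * h))))"
      by (rule mult_left_mono[OF _ gauss_density_nonneg])
    also have "\<dots> = (4 * h) ^ j * fact j * (gauss_density h x * exp ((norm x)\<^sup>2 / (4 * h)))"
      by (simp add: algebra_simps)
    also have "\<dots> = C * gauss_density (2 * h) x"
      using gauss_density_mult_exp[OF \<open>h > 0\<close>, of x] by (simp add: C_def)
    finally show ?thesis .
  qed
  then have "(\<integral>\<^sup>+x. ennreal (gauss_density h (x :: real^'n) * norm x ^ (2 * j)) \<partial>lborel)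
      \<le> (\<integral>\<^sup>+x. ennreal (C * gauss_density (2 * h) (x :: real^'n)) \<partial>lborel)"
    by (intro nn_integral_mono ennreal_leI)
  also have "\<dots> = ennreal C * (\<integral>\<^sup>+x. ennreal (gauss_density (2 * h) (x :: real^'n)) \<partial>lborel)"
  proof -
    have "C \<ge> 0" using \<open>h > 0\<close> by (simp add: C_def)
    then show ?thesis
      by (simp only: ennreal_mult') (rule nn_integral_cmult, measurable)
  qed
  also have "\<dots> = ennreal C"
    by (simp add: normalized)
  finally show ?thesis unfolding C_def .
qed

lemma nn_integral_lborel_uminus:
  fixes f :: "'a::euclidean_space \<Rightarrow> ennreal"
  assumes "f \<in> borel_measurable borel"
  shows "(\<integral>\<^sup>+x. f (- x) \<partial>lborel) = (\<integral>\<^sup>+x. f x \<partial>lborel)"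
proof -
  have "distr lborel borel uminus = (lborel :: 'a measure)"
    by (subst lborel_affine[of "-1" 0]) (auto simp: density_1 one_ennreal_def[symmetric])
  then have "(\<integral>\<^sup>+x. f x \<partial>lborel) = (\<integral>\<^sup>+x. f x \<partial>distr lborel borel uminus)"
    by simp
  also have "\<dots> = (\<integral>\<^sup>+x. f (- x) \<partial>lborel)"
    using assms by (subst nn_integral_distr) auto
  finally show ?thesis ..
qed

lemma nn_integral_symmetrize_even_density:
  fixes g f :: "'a::euclidean_space \<Rightarrow> real"
  assumes [measurable]: "g \<in> borel_measurable borel" "f \<in> borel_measurable borel"
    and "\<And>x. g x \<ge> 0" "\<And>x. f x \<ge> 0" and even: "\<And>x. g (- x) = g x"
  shows "(\<integral>\<^sup>+x. ennreal (g x * f x) \<partial>lborel) = (\<integral>\<^sup>+x. ennreal (g x * ((f x + f (- x)) / 2)) \<partial>lborel)"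
proof -
  have "(\<integral>\<^sup>+x. ennreal (g x * (f x + f (- x))) \<partial>lborel)
      = (\<integral>\<^sup>+x. ennreal (g x * f x) \<partial>lborel) + (\<integral>\<^sup>+x. ennreal (g (- x) * f (- x)) \<partial>lborel)"
    using assms by (simp add: distrib_left ennreal_plus even nn_integral_add)
  also have "(\<integral>\<^sup>+x. ennreal (g (- x) * f (- x)) \<partial>lborel) = (\<integral>\<^sup>+x. ennreal (g x * f x) \<partial>lborel)"
    by (rule nn_integral_lborel_uminus[where f = "\<lambda>x. ennreal (g x * f x)"]) measurable
  finally have "(\<integral>\<^sup>+x. ennreal (g x * (f x + f (- x))) \<partial>lborel) / 2 = (\<integral>\<^sup>+x. ennreal (g x * f x) \<partial>lborel)"
    by (simp add: mult_2[symmetric] ennreal_mult_divide_eq mult.commute[of 2])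
  moreover have "ennreal (g x * ((f x + f (- x)) / 2)) = ennreal (g x * (f x + f (- x))) / 2" for x
    using assms by (simp add: divide_ennreal[symmetric])
  ultimately show ?thesis by (simp add: nn_integral_divide)
qed

lemma nn_integral_density_linear_combination_le:
  fixes g :: "'a \<Rightarrow> real" and \<phi> :: "'i \<Rightarrow> 'a \<Rightarrow> real"
  assumes [measurable]: "g \<in> borel_measurable M" "\<And>i. i \<in> I \<Longrightarrow> \<phi> i \<in> borel_measurable M"
    and "finite I" "\<And>x. g x \<ge> 0" "\<And>i x. i \<in> I \<Longrightarrow> \<phi> i x \<ge> 0"
    and "b \<ge> 0" "\<And>i. i \<in> I \<Longrightarrow> a i \<ge> 0" "\<And>i. i \<in> I \<Longrightarrow> m i \<ge> 0"
    and normalized: "(\<integral>\<^sup>+x. ennreal (g x) \<partial>M) = 1"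
    and moments: "\<And>i. i \<in> I \<Longrightarrow> (\<integral>\<^sup>+x. ennreal (g x * \<phi> i x) \<partial>M) \<le> ennreal (m i)"
  shows "(\<integral>\<^sup>+x. ennreal (g x * (b + (\<Sum>i\<in>I. a i * \<phi> i x))) \<partial>M) \<le> ennreal (b + (\<Sum>i\<in>I. a i * m i))"
proof -
  have "ennreal (g x * (b + (\<Sum>i\<in>I. a i * \<phi> i x)))
      = ennreal b * ennreal (g x) + (\<Sum>i\<in>I. ennreal (a i) * ennreal (g x * \<phi> i x))" for x
    using assms
    by (simp add: distrib_left sum_distrib_left ennreal_plus sum_nonneg sum_ennreal ennreal_mult'[symmetric]
        mult.assoc mult.left_commute mult.commute[of b])
  then have "(\<integral>\<^sup>+x. ennreal (g x * (b + (\<Sum>i\<in>I. a i * \<phi> i x))) \<partial>M)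
      = ennreal b * (\<integral>\<^sup>+x. ennreal (g x) \<partial>M) + (\<Sum>i\<in>I. ennreal (a i) * (\<integral>\<^sup>+x. ennreal (g x * \<phi> i x) \<partial>M))"
    by (simp add: nn_integral_add nn_integral_sum nn_integral_cmult)
  also have "\<dots> \<le> ennreal b + (\<Sum>i\<in>I. ennreal (a i) * ennreal (m i))"
    unfolding normalized by (auto intro!: add_mono sum_mono mult_left_mono moments)
  also have "\<dots> = ennreal (b + (\<Sum>i\<in>I. a i * m i))"
    using assms by (simp add: ennreal_mult'[symmetric] sum_ennreal ennreal_plus sum_nonneg)
  finally show ?thesis .
qed

lemma gauss_density_Gamma_c_shift_le:
  fixes V :: "real^'n \<Rightarrow> real" and x y :: "real^'n" and s h :: real
  assumes "\<gamma> > 0" "c \<ge> 1" "\<And>x. V x \<ge> 0" "V \<in> borel_measurable borel" "h > 0"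
    and normalized: "\<And>h. h > 0 \<Longrightarrow> (\<integral>\<^sup>+x. ennreal (gauss_density h (x :: real^'n)) \<partial>lborel) = 1"
  defines "G \<equiv> Gamma_c V \<gamma> c x y" and "L \<equiv> s\<^sup>2 * (8 + 12 * c\<^sup>2) + c * s\<^sup>2 / 2"
  shows "(\<integral>\<^sup>+w. ennreal (gauss_density h w * Gamma_c V \<gamma> c x (y + s *\<^sub>R w) ^ l) \<partial>lborel)
    \<le> ennreal (G ^ l + (\<Sum>i<l. 4 ^ l * G ^ i * L ^ (l - i) * ((4 * h) ^ (l - i) * fact (l - i) * sqrt 2 ^ CARD('n))))"
proof -
  have "G \<ge> 1" using Gamma_c_ge_1 assms unfolding G_def by blast
  have "L \<ge> 0" using \<open>c \<ge> 1\<close> by (simp add: L_def)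
  define f where "f w = Gamma_c V \<gamma> c x (y + s *\<^sub>R w) ^ l" for w
  have [measurable]: "f \<in> borel_measurable borel"
    unfolding f_def Gamma_c_def using assms(4) by measurable
  have "f w \<ge> 0" for w
    unfolding f_def using assms by (intro zero_le_power order_trans[OF zero_le_one Gamma_c_ge_1]) auto
  have "(\<integral>\<^sup>+w. ennreal (gauss_density h w * f w) \<partial>lborel)
      = (\<integral>\<^sup>+w. ennreal (gauss_density h w * ((f w + f (- w)) / 2)) \<partial>lborel)"
    using \<open>\<And>w. f w \<ge> 0\<close>
    by (intro nn_integral_symmetrize_even_density) (auto simp: gauss_density_nonneg gauss_density_uminus)
  also have "\<dots> \<le> (\<integral>\<^sup>+w. ennreal (gauss_density h (w :: real^'n)
      * (G ^ l + (\<Sum>i<l. 4 ^ l * G ^ i * L ^ (l - i) * norm w ^ (2 * (l - i))))) \<partial>lborel)"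
    using Gamma_c_shift_symmetric_le[of \<gamma> c V x y s _ l] assms
    by (intro nn_integral_mono ennreal_leI mult_left_mono gauss_density_nonneg)
      (simp add: f_def G_def L_def)
  also have "\<dots> \<le> ennreal (G ^ l + (\<Sum>i<l. 4 ^ l * G ^ i * L ^ (l - i) * ((4 * h) ^ (l - i) * fact (l - i) * sqrt 2 ^ CARD('n))))"
  proof (rule nn_integral_density_linear_combination_le)
    show "(\<integral>\<^sup>+w. ennreal (gauss_density h (w :: real^'n) * norm w ^ (2 * (l - i))) \<partial>lborel)
        \<le> ennreal ((4 * h) ^ (l - i) * fact (l - i) * sqrt 2 ^ CARD('n))" for i
      using \<open>h > 0\<close> by (intro gauss_density_moment_le normalized) auto
  qed (use \<open>G \<ge> 1\<close> \<open>L \<ge> 0\<close> \<open>h > 0\<close> in \<open>auto simp: gauss_density_nonneg normalized\<close>)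
  finally show ?thesis unfolding f_def .
qed

lemma gauss_density_Gamma_c_shift_bound:
  fixes V :: "real^'n \<Rightarrow> real" and s :: real
  assumes "\<gamma> > 0" "c \<ge> 1" "\<And>x. V x \<ge> 0" "V \<in> borel_measurable borel"
    and normalized: "\<And>h. h > 0 \<Longrightarrow> (\<integral>\<^sup>+x. ennreal (gauss_density h (x :: real^'n)) \<partial>lborel) = 1"
  obtains C where "C > 0"
    and "\<And>x y h. h > 0 \<Longrightarrow>
      (\<integral>\<^sup>+w. ennreal (gauss_density h w * Gamma_c V \<gamma> c x (y + s *\<^sub>R w) ^ l) \<partial>lborel)
        \<le> ennreal (Gamma_c V \<gamma> c x y ^ l + C * (\<Sum>i<l. h ^ (l - i) * Gamma_c V \<gamma> c x y ^ i))"
proof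
  define L where "L = s\<^sup>2 * (8 + 12 * c\<^sup>2) + c * s\<^sup>2 / 2"
  have "L \<ge> 0" using \<open>c \<ge> 1\<close> by (simp add: L_def)
  define C where "C = 4 ^ l * 4 ^ l * (1 + L) ^ l * fact l * sqrt 2 ^ CARD('n)"
  show "C > 0" using \<open>L \<ge> 0\<close> by (simp add: C_def)
  fix x y :: "real^'n" and h :: real
  assume "h > 0"
  define G where "G = Gamma_c V \<gamma> c x y"
  have "G \<ge> 1" using Gamma_c_ge_1 assms unfolding G_def by blast
  have "(\<integral>\<^sup>+w. ennreal (gauss_density h w * Gamma_c V \<gamma> c x (y + s *\<^sub>R w) ^ l) \<partial>lborel)
      \<le> ennreal (G ^ l + (\<Sum>i<l. 4 ^ l * G ^ i * L ^ (l - i) * ((4 * h) ^ (l - i) * fact (l - i) * sqrt 2 ^ CARD('n))))"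
    unfolding G_def L_def by (rule gauss_density_Gamma_c_shift_le[OF assms(1-4) \<open>h > 0\<close> normalized])
  also have "\<dots> \<le> ennreal (G ^ l + C * (\<Sum>i<l. h ^ (l - i) * G ^ i))"
    using sum_moment_coefficients_le[of G L h "sqrt 2 ^ CARD('n)" l] \<open>G \<ge> 1\<close> \<open>L \<ge> 0\<close> \<open>h > 0\<close>
    by (intro ennreal_leI add_left_mono) (simp add: C_def)
  finally show "(\<integral>\<^sup>+w. ennreal (gauss_density h w * Gamma_c V \<gamma> c x (y + s *\<^sub>R w) ^ l) \<partial>lborel)
      \<le> ennreal (Gamma_c V \<gamma> c x y ^ l + C * (\<Sum>i<l. h ^ (l - i) * Gamma_c V \<gamma> c x y ^ i))"
    unfolding G_def .
qed

section \<open>Brownian increments and the algorithm\<close>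

lemma (in prob_space) nn_integral_indep_var:
  assumes "indep_var N1 X N2 Y" and [measurable]: "f \<in> borel_measurable (N1 \<Otimes>\<^sub>M N2)"
  shows "(\<integral>\<^sup>+\<omega>. f (X \<omega>, Y \<omega>) \<partial>M) = (\<integral>\<^sup>+\<omega>. (\<integral>\<^sup>+\<omega>'. f (X \<omega>, Y \<omega>') \<partial>M) \<partial>M)"
proof -
  have [measurable]: "X \<in> measurable M N1" "Y \<in> measurable M N2"
    and joint: "distr M N1 X \<Otimes>\<^sub>M distr M N2 Y = distr M (N1 \<Otimes>\<^sub>M N2) (\<lambda>\<omega>. (X \<omega>, Y \<omega>))"
    using assms(1) unfolding indep_var_distribution_eq by auto
  interpret Y: prob_space "distr M N2 Y"
    by (rule prob_space_distr) measurable
  have f': "f \<in> borel_measurable (distr M N1 X \<Otimes>\<^sub>M distr M N2 Y)"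
    by (simp add: joint)
  have "(\<integral>\<^sup>+\<omega>. f (X \<omega>, Y \<omega>) \<partial>M) = (\<integral>\<^sup>+z. f z \<partial>(distr M N1 X \<Otimes>\<^sub>M distr M N2 Y))"
    by (simp add: joint nn_integral_distr)
  also have "\<dots> = (\<integral>\<^sup>+x. (\<integral>\<^sup>+y. f (x, y) \<partial>distr M N2 Y) \<partial>distr M N1 X)"
    by (rule Y.nn_integral_fst[OF f', symmetric])
  also have "\<dots> = (\<integral>\<^sup>+\<omega>. (\<integral>\<^sup>+y. f (X \<omega>, y) \<partial>distr M N2 Y) \<partial>M)"
    using Y.borel_measurable_nn_integral_fst[OF f'] by (simp add: nn_integral_distr)
  also have "\<dots> = (\<integral>\<^sup>+\<omega>. (\<integral>\<^sup>+\<omega>'. f (X \<omega>, Y \<omega>') \<partial>M) \<partial>M)"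
    using measurable_Pair2[OF assms(2) measurable_space[of X M N1]]
    by (intro nn_integral_cong) (simp add: nn_integral_distr)
  finally show ?thesis .
qed

lemma std_brownian_motion_gauss_density_normalized:
  fixes B :: "real \<Rightarrow> 'a \<Rightarrow> real^'n"
  assumes "std_brownian_motion M B" "h > 0"
  shows "(\<integral>\<^sup>+x. ennreal (gauss_density h (x :: real^'n)) \<partial>lborel) = 1"
proof -
  interpret prob_space M using assms(1) by (simp add: std_brownian_motion_def)
  have "\<And>s t. 0 \<le> s \<Longrightarrow> s < t \<Longrightarrow>
      distributed M lborel (\<lambda>\<omega>. B t \<omega> - B s \<omega>) (\<lambda>x. ennreal (gauss_density (t - s) x))"
    using assms(1) unfolding std_brownian_motion_def by blast
  from this[of 0 h] have "distributed M lborel (\<lambda>\<omega>. B h \<omega> - B 0 \<omega>) (\<lambda>x. ennreal (gauss_density h x))"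
    using assms(2) by simp
  from distributed_nn_integral[OF this, of "\<lambda>_. 1"]
  show ?thesis by (simp add: emeasure_space_1)
qed

text \<open>The algorithm driven by an arbitrary sequence \<open>d\<close> of Brownian increments; \<open>ula\<close> is the
  instance \<open>d k = B((k+1) \<delta>) - B(k \<delta>)\<close>. It exhibits the state after \<open>k\<close> steps as a measurable
  function of the first \<open>k\<close> increments alone.\<close>

fun ula_of_increments :: "(real^'n \<Rightarrow> real^'n) \<Rightarrow> real \<Rightarrow> real \<Rightarrow> real^'n \<Rightarrow> real^'n
    \<Rightarrow> (nat \<Rightarrow> real^'n) \<Rightarrow> nat \<Rightarrow> (real^'n) \<times> (real^'n)" where
  "ula_of_increments gV \<gamma> \<delta> x0 p0 d 0 = (x0, p0)"
| "ula_of_increments gV \<gamma> \<delta> x0 p0 d (Suc k) =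
     (let (x, p) = ula_of_increments gV \<gamma> \<delta> x0 p0 d k
      in (x + \<delta> *\<^sub>R p, (1 - \<gamma> * \<delta>) *\<^sub>R p - \<delta> *\<^sub>R gV x + sqrt (2 * \<gamma> * \<delta>) *\<^sub>R ((1 / sqrt \<delta>) *\<^sub>R d k)))"

lemma ula_eq_ula_of_increments:
  "ula gV \<gamma> \<delta> x0 p0 B k \<omega> = ula_of_increments gV \<gamma> \<delta> x0 p0 (\<lambda>i. B ((real i + 1) * \<delta>) \<omega> - B (real i * \<delta>) \<omega>) k"
  by (induction k) (simp_all add: Let_def split_beta)

lemma ula_of_increments_cong:
  "(\<And>i. i < k \<Longrightarrow> d i = d' i) \<Longrightarrow> ula_of_increments gV \<gamma> \<delta> x0 p0 d k = ula_of_increments gV \<gamma> \<delta> x0 p0 d' k"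
  by (induction k) simp_all

lemma ula_eq_ula_of_past_increments:
  "ula gV \<gamma> \<delta> x0 p0 B k \<omega>
     = ula_of_increments gV \<gamma> \<delta> x0 p0 (\<lambda>i\<in>{..<k}. B ((real i + 1) * \<delta>) \<omega> - B (real i * \<delta>) \<omega>) k"
  unfolding ula_eq_ula_of_increments by (rule ula_of_increments_cong) simp

lemma measurable_ula_of_increments:
  assumes [measurable]: "gV \<in> borel_measurable borel" and "k \<le> n"
  shows "(\<lambda>d. ula_of_increments gV \<gamma> \<delta> x0 p0 d k) \<in> PiM {..<n} (\<lambda>_. borel) \<rightarrow>\<^sub>M borel"
  using \<open>k \<le> n\<close>
proof (induction k)
  case 0
  then show ?case by simp
next
  case (Suc k)
  have [measurable]: "(\<lambda>d. ula_of_increments gV \<gamma> \<delta> x0 p0 d k) \<in> PiM {..<n} (\<lambda>_. borel) \<rightarrow>\<^sub>M borel \<Otimes>\<^sub>M borel"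
    using Suc by (simp add: borel_prod)
  have [measurable]: "(\<lambda>d. d k) \<in> PiM {..<n} (\<lambda>_. borel :: (real^'n) measure) \<rightarrow>\<^sub>M borel"
    using Suc by (intro measurable_component_singleton) simp
  have "(\<lambda>d. ula_of_increments gV \<gamma> \<delta> x0 p0 d (Suc k)) \<in> PiM {..<n} (\<lambda>_. borel) \<rightarrow>\<^sub>M borel \<Otimes>\<^sub>M borel"
    by (simp add: split_beta) measurable
  then show ?case by (simp add: borel_prod)
qed

lemma measurable_ula:
  fixes B :: "real \<Rightarrow> 'a \<Rightarrow> real^'n"
  assumes "std_brownian_motion M B" "gV \<in> borel_measurable borel" "\<delta> \<ge> 0"
  shows "(\<lambda>\<omega>. ula gV \<gamma> \<delta> x0 p0 B k \<omega>) \<in> M \<rightarrow>\<^sub>M borel \<Otimes>\<^sub>M borel"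
proof -
  have B: "B t \<in> borel_measurable M" if "t \<ge> 0" for t
    using assms(1) that by (simp add: std_brownian_motion_def)
  have "(\<lambda>\<omega>. \<lambda>i\<in>{..<k}. B ((real i + 1) * \<delta>) \<omega> - B (real i * \<delta>) \<omega>) \<in> M \<rightarrow>\<^sub>M PiM {..<k} (\<lambda>_. borel)"
    using assms(3) by (intro measurable_restrict borel_measurable_diff B) auto
  from measurable_compose[OF this measurable_ula_of_increments[OF assms(2) order_refl]]
  show ?thesis by (simp add: ula_eq_ula_of_past_increments borel_prod)
qed

text \<open>\<open>indep_var\<close> requires both random variables to have the same type, so the increment on
  \<open>[k \<delta>, t]\<close> is packaged as a function on the index set \<open>{k}\<close>.\<close>

lemma std_brownian_motion_indep_past_increments:
  fixes B :: "real \<Rightarrow> 'a \<Rightarrow> real^'n"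
  assumes "std_brownian_motion M B" "\<delta> \<ge> 0" "real k * \<delta> \<le> t"
  shows "prob_space.indep_var M
    (PiM {..<k} (\<lambda>_. borel)) (\<lambda>\<omega>. \<lambda>i\<in>{..<k}. B ((real i + 1) * \<delta>) \<omega> - B (real i * \<delta>) \<omega>)
    (PiM {k} (\<lambda>_. borel)) (\<lambda>\<omega>. \<lambda>i\<in>{k}. B t \<omega> - B (real k * \<delta>) \<omega>)"
proof -
  interpret prob_space M using assms(1) by (simp add: std_brownian_motion_def)
  define ts where "ts i = (if i \<le> k then real i * \<delta> else t)" for i
  define D where "D i \<omega> = B (ts (Suc i)) \<omega> - B (ts i) \<omega>" for i \<omega>
  have "mono ts"
    using assms(2,3) by (auto simp: ts_def mono_iff_le_Suc not_less_eq_eq intro: mult_right_mono dest: le_antisym)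
  moreover have "\<And>ts n. 0 \<le> ts 0 \<Longrightarrow> (\<forall>i<n. ts i \<le> ts (Suc i)) \<Longrightarrow>
      indep_vars (\<lambda>_. borel) (\<lambda>i \<omega>. B (ts (Suc i)) \<omega> - B (ts i) \<omega>) {..<n}"
    using assms(1) unfolding std_brownian_motion_def by blast
  moreover have "ts 0 = 0" by (simp add: ts_def)
  ultimately have "indep_vars (\<lambda>_. borel) D {..<Suc k}"
    unfolding D_def by (simp add: monoD)
  then have "indep_var (PiM {..<k} (\<lambda>_. borel)) (\<lambda>\<omega>. restrict (\<lambda>i. D i \<omega>) {..<k})
      (PiM {k} (\<lambda>_. borel)) (\<lambda>\<omega>. restrict (\<lambda>i. D i \<omega>) {k})"
    by (rule indep_var_restrict) auto
  moreover have "(\<lambda>\<omega>. restrict (\<lambda>i. D i \<omega>) {..<k}) = (\<lambda>\<omega>. \<lambda>i\<in>{..<k}. B ((real i + 1) * \<delta>) \<omega> - B (real i * \<delta>) \<omega>)"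
    "(\<lambda>\<omega>. restrict (\<lambda>i. D i \<omega>) {k}) = (\<lambda>\<omega>. \<lambda>i\<in>{k}. B t \<omega> - B (real k * \<delta>) \<omega>)"
    by (auto simp: D_def ts_def add.commute intro!: restrict_ext)
  ultimately show ?thesis by simp
qed

lemma ula_noise_increment_nn_integral:
  fixes B :: "real \<Rightarrow> 'a \<Rightarrow> real^'n" and f :: "((real^'n) \<times> (real^'n)) \<times> (real^'n) \<Rightarrow> ennreal"
  assumes "std_brownian_motion M B" "gV \<in> borel_measurable borel" "\<delta> > 0" "real k * \<delta> < t"
    and f: "f \<in> borel_measurable borel"
  shows "(\<integral>\<^sup>+\<omega>. f (ula gV \<gamma> \<delta> x0 p0 B k \<omega>, B t \<omega> - B (real k * \<delta>) \<omega>) \<partial>M)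
       = (\<integral>\<^sup>+\<omega>. (\<integral>\<^sup>+w. ennreal (gauss_density (t - real k * \<delta>) w) * f (ula gV \<gamma> \<delta> x0 p0 B k \<omega>, w) \<partial>lborel) \<partial>M)"
proof -
  interpret prob_space M using assms(1) by (simp add: std_brownian_motion_def)
  define X where "X \<omega> = (\<lambda>i\<in>{..<k}. B ((real i + 1) * \<delta>) \<omega> - B (real i * \<delta>) \<omega>)" for \<omega>
  define Y where "Y \<omega> = (\<lambda>i\<in>{k}. B t \<omega> - B (real k * \<delta>) \<omega>)" for \<omega>
  define U where "U d = ula_of_increments gV \<gamma> \<delta> x0 p0 d k" for d
  have indep: "indep_var (PiM {..<k} (\<lambda>_. borel)) X (PiM {k} (\<lambda>_. borel)) Y"
    using std_brownian_motion_indep_past_increments[OF assms(1), of \<delta> k t] assms(3,4)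
    unfolding X_def Y_def by simp
  have ula: "ula gV \<gamma> \<delta> x0 p0 B k \<omega> = U (X \<omega>)" for \<omega>
    unfolding U_def X_def by (rule ula_eq_ula_of_past_increments)
  have [measurable]: "U \<in> PiM {..<k} (\<lambda>_. borel) \<rightarrow>\<^sub>M borel \<Otimes>\<^sub>M borel"
    unfolding U_def borel_prod by (rule measurable_ula_of_increments[OF assms(2) order_refl])
  have [measurable]: "(\<lambda>e. e k) \<in> PiM {k} (\<lambda>_. borel :: (real^'n) measure) \<rightarrow>\<^sub>M borel"
    by (rule measurable_component_singleton) simp
  have [measurable]: "f \<in> borel_measurable ((borel \<Otimes>\<^sub>M borel) \<Otimes>\<^sub>M borel)"
    using f by (simp add: borel_prod)
  have "\<And>s t. 0 \<le> s \<Longrightarrow> s < t \<Longrightarrow>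
      distributed M lborel (\<lambda>\<omega>. B t \<omega> - B s \<omega>) (\<lambda>x. ennreal (gauss_density (t - s) x))"
    using assms(1) unfolding std_brownian_motion_def by blast
  then have W: "distributed M lborel (\<lambda>\<omega>. B t \<omega> - B (real k * \<delta>) \<omega>)
      (\<lambda>w. ennreal (gauss_density (t - real k * \<delta>) w))"
    using assms(3,4) by simp
  have "(\<integral>\<^sup>+\<omega>. f (ula gV \<gamma> \<delta> x0 p0 B k \<omega>, B t \<omega> - B (real k * \<delta>) \<omega>) \<partial>M)
      = (\<integral>\<^sup>+\<omega>. (\<lambda>(d, e). f (U d, e k)) (X \<omega>, Y \<omega>) \<partial>M)"
    by (simp add: ula Y_def)
  also have "\<dots> = (\<integral>\<^sup>+\<omega>. (\<integral>\<^sup>+\<omega>'. (\<lambda>(d, e). f (U d, e k)) (X \<omega>, Y \<omega>') \<partial>M) \<partial>M)"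
    by (rule nn_integral_indep_var[OF indep]) measurable
  also have "\<dots> = (\<integral>\<^sup>+\<omega>. (\<integral>\<^sup>+w. ennreal (gauss_density (t - real k * \<delta>) w) * f (ula gV \<gamma> \<delta> x0 p0 B k \<omega>, w) \<partial>lborel) \<partial>M)"
  proof -
    have "(\<integral>\<^sup>+\<omega>'. f (z, B t \<omega>' - B (real k * \<delta>) \<omega>') \<partial>M)
        = (\<integral>\<^sup>+w. ennreal (gauss_density (t - real k * \<delta>) w) * f (z, w) \<partial>lborel)" for z
      by (rule distributed_nn_integral[OF W, symmetric]) (measurable, auto simp: space_pair_measure)
    then show ?thesis by (simp add: ula Y_def)
  qed
  finally show ?thesis .
qed

lemma ula_shifted_power_nn_integral_le:
  fixes B :: "real \<Rightarrow> 'a \<Rightarrow> real^'n" and \<Psi> :: "real^'n \<Rightarrow> real^'n \<Rightarrow> real"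
    and F :: "(real^'n) \<times> (real^'n) \<Rightarrow> (real^'n) \<times> (real^'n)"
    and \<gamma> :: real and x0 p0 :: "real^'n"
  assumes "std_brownian_motion M B" "gV \<in> borel_measurable borel" "\<delta> > 0" "real k * \<delta> \<le> t"
    and F_meas: "F \<in> borel_measurable borel" and \<Psi>_meas: "(\<lambda>(x, y). \<Psi> x y) \<in> borel_measurable borel"
    and \<Psi>_nonneg: "\<And>x y. \<Psi> x y \<ge> 0" and "C \<ge> 0"
    and gauss: "\<And>x y h. h > 0 \<Longrightarrow> (\<integral>\<^sup>+w. ennreal (gauss_density h w * \<Psi> x (y + s *\<^sub>R w) ^ l) \<partial>lborel)
      \<le> ennreal (\<Psi> x y ^ l + C * (\<Sum>i<l. h ^ (l - i) * \<Psi> x y ^ i))"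
  defines "Z \<omega> \<equiv> F (ula gV \<gamma> \<delta> x0 p0 B k \<omega>)"
  shows "(\<integral>\<^sup>+\<omega>. ennreal (\<Psi> (fst (Z \<omega>)) (snd (Z \<omega>) + s *\<^sub>R (B t \<omega> - B (real k * \<delta>) \<omega>)) ^ l) \<partial>M)
    \<le> (\<integral>\<^sup>+\<omega>. ennreal (\<Psi> (fst (Z \<omega>)) (snd (Z \<omega>)) ^ l) \<partial>M)
      + ennreal C * (\<Sum>i<l. ennreal ((t - real k * \<delta>) ^ (l - i)) * (\<integral>\<^sup>+\<omega>. ennreal (\<Psi> (fst (Z \<omega>)) (snd (Z \<omega>)) ^ i) \<partial>M))"
proof (cases "t = real k * \<delta>")
  case True
  then show ?thesis by (simp add: add_increasing2)
next
  case False
  define h where "h = t - real k * \<delta>"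
  have "h > 0" using False assms(4) by (simp add: h_def)
  have [measurable]: "F \<in> borel \<Otimes>\<^sub>M borel \<rightarrow>\<^sub>M borel \<Otimes>\<^sub>M borel"
    "(\<lambda>(x, y). \<Psi> x y) \<in> borel_measurable (borel \<Otimes>\<^sub>M borel)"
    using F_meas \<Psi>_meas by (simp_all add: borel_prod)
  have [measurable]: "(\<lambda>\<omega>. ula gV \<gamma> \<delta> x0 p0 B k \<omega>) \<in> M \<rightarrow>\<^sub>M borel \<Otimes>\<^sub>M borel"
    using measurable_ula[OF assms(1,2)] \<open>\<delta> > 0\<close> by simp
  define f where "f p = ennreal (\<Psi> (fst (F (fst p))) (snd (F (fst p)) + s *\<^sub>R snd p) ^ l)"
    for p :: "((real^'n) \<times> (real^'n)) \<times> (real^'n)"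
  have "f \<in> borel_measurable borel"
    unfolding f_def borel_prod[symmetric] by measurable
  then have "(\<integral>\<^sup>+\<omega>. ennreal (\<Psi> (fst (Z \<omega>)) (snd (Z \<omega>) + s *\<^sub>R (B t \<omega> - B (real k * \<delta>) \<omega>)) ^ l) \<partial>M)
      = (\<integral>\<^sup>+\<omega>. (\<integral>\<^sup>+w. ennreal (gauss_density h w * \<Psi> (fst (Z \<omega>)) (snd (Z \<omega>) + s *\<^sub>R w) ^ l) \<partial>lborel) \<partial>M)"
    using ula_noise_increment_nn_integral[OF assms(1-3), of k t f] False assms(4)
    by (simp add: f_def Z_def h_def ennreal_mult' gauss_density_nonneg)
  also have "\<dots> \<le> (\<integral>\<^sup>+\<omega>. ennreal (\<Psi> (fst (Z \<omega>)) (snd (Z \<omega>)) ^ l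
      + C * (\<Sum>i<l. h ^ (l - i) * \<Psi> (fst (Z \<omega>)) (snd (Z \<omega>)) ^ i)) \<partial>M)"
    by (intro nn_integral_mono gauss \<open>h > 0\<close>)
  also have "\<dots> = (\<integral>\<^sup>+\<omega>. ennreal (\<Psi> (fst (Z \<omega>)) (snd (Z \<omega>)) ^ l)
      + ennreal C * (\<Sum>i<l. ennreal (h ^ (l - i)) * ennreal (\<Psi> (fst (Z \<omega>)) (snd (Z \<omega>)) ^ i)) \<partial>M)"
    using \<Psi>_nonneg \<open>C \<ge> 0\<close> \<open>h > 0\<close>
    by (simp add: ennreal_plus ennreal_mult sum_nonneg flip: sum_ennreal)
  also have "\<dots> = (\<integral>\<^sup>+\<omega>. ennreal (\<Psi> (fst (Z \<omega>)) (snd (Z \<omega>)) ^ l) \<partial>M)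
      + ennreal C * (\<Sum>i<l. ennreal (h ^ (l - i)) * (\<integral>\<^sup>+\<omega>. ennreal (\<Psi> (fst (Z \<omega>)) (snd (Z \<omega>)) ^ i) \<partial>M))"
    unfolding Z_def by (simp add: nn_integral_add nn_integral_cmult nn_integral_sum)
  finally show ?thesis by (simp only: h_def)
qed

lemma mult_lt_1_of_le_sqrt_bound:
  fixes \<gamma> \<delta> D :: real
  assumes "\<gamma> > 0" "\<delta> \<le> (D + 1 - sqrt (D\<^sup>2 + 1)) / \<gamma>"
  shows "\<gamma> * \<delta> < 1"
proof -
  have "D < sqrt (D\<^sup>2 + 1)"
    by (rule real_less_rsqrt) simp
  then show ?thesis
    using assms by (simp add: field_simps)
qed

lemma borel_measurable_has_derivative:
  assumes "\<And>x. (f has_derivative f' x) (at x)"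
  shows "f \<in> borel_measurable borel"
  using assms
  by (intro borel_measurable_continuous_onI continuous_at_imp_continuous_on) (auto intro: has_derivative_continuous)

theorem lemma2:
  fixes V :: "real^'n \<Rightarrow> real"
    and gV :: "real^'n \<Rightarrow> real^'n"
    and H :: "real^'n \<Rightarrow> real^'n \<Rightarrow> real^'n"
    and \<gamma> \<nu> \<alpha> \<beta> \<delta> :: real
    and M :: "'a measure"
    and B :: "real \<Rightarrow> 'a \<Rightarrow> real^'n"
    and x0 p0 :: "real^'n"
    and l :: nat
  assumes gamma_pos: "\<gamma> > 0"
    and A1a: "\<And>x. V x \<ge> 0"
    and grad: "\<And>x. GDERIV V x :> gV x"
    and hess: "\<And>x. (gV has_derivative H x) (at x)"
    and nu_pos: "\<nu> > 0"
    and A1b: "\<And>x. onorm (H x) \<le> \<nu>"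
    and A1c: "C_inf_poly V"
    and alpha_pos: "\<alpha> > 0"
    and beta: "0 < \<beta>" "\<beta> < 1"
    and A2: "\<And>x. (1/2) * (gV x \<bullet> x) \<ge> \<beta> * V x + \<gamma>\<^sup>2 * C_beta \<beta> * (norm x)\<^sup>2 - \<alpha>"
    and S: "0 < \<delta>" "\<delta> \<le> 1 / \<gamma>" "\<delta> \<le> \<gamma> / (2 * \<nu>)"
           "\<delta> \<le> (D_const \<gamma> \<nu> \<beta> + 1 - sqrt ((D_const \<gamma> \<nu> \<beta>)\<^sup>2 + 1)) / \<gamma>"
    and BM: "std_brownian_motion M B"
    and l_pos: "l > 0"
  shows "\<exists>C2>0. \<forall>(k::nat) (t::real). real k * \<delta> \<le> t \<and> t \<le> (real k + 1) * \<delta> \<longrightarrow>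
    (let c = (1 - \<gamma> * \<delta> / 2) / (1 - \<gamma> * \<delta>);
         \<xi> = (\<lambda>j \<omega>. fst (ula gV \<gamma> \<delta> x0 p0 B j \<omega>));
         \<rho> = (\<lambda>j \<omega>. snd (ula gV \<gamma> \<delta> x0 p0 B j \<omega>));
         \<tau> = (\<lambda>\<omega>. (1 - \<gamma> * \<delta>) *\<^sub>R \<rho> k \<omega> - \<delta> *\<^sub>R gV (\<xi> k \<omega>));
         R = (\<lambda>\<omega>. \<tau> \<omega> + sqrt (2 * \<gamma>) *\<^sub>R (B t \<omega> - B (real k * \<delta>) \<omega>))
     in (\<integral>\<^sup>+ \<omega>. ennreal ((Gamma_c V \<gamma> c (\<xi> (Suc k) \<omega>) (R \<omega>)) ^ l) \<partial>M)
        \<le> (\<integral>\<^sup>+ \<omega>. ennreal ((Gamma_c V \<gamma> c (\<xi> (Suc k) \<omega>) (\<tau> \<omega>)) ^ l) \<partial>M)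
           + ennreal C2 * (\<Sum>i<l. ennreal ((t - real k * \<delta>) ^ (l - i))
                 * (\<integral>\<^sup>+ \<omega>. ennreal ((Gamma_c V \<gamma> c (\<xi> (Suc k) \<omega>) (\<tau> \<omega>)) ^ i) \<partial>M)))"
proof -
  have gV_meas: "gV \<in> borel_measurable borel"
    using hess by (rule borel_measurable_has_derivative)
  have V_meas: "V \<in> borel_measurable borel"
    using grad unfolding gderiv_def by (rule borel_measurable_has_derivative)
  have "\<gamma> * \<delta> < 1"
    using gamma_pos S(4) by (rule mult_lt_1_of_le_sqrt_bound)
  define c where "c = (1 - \<gamma> * \<delta> / 2) / (1 - \<gamma> * \<delta>)"
  have "c \<ge> 1" using \<open>\<gamma> * \<delta> < 1\<close> gamma_pos S(1) by (simp add: c_def field_simps)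
  obtain C where "C > 0" and gauss: "\<And>x y h. h > 0 \<Longrightarrow>
      (\<integral>\<^sup>+w. ennreal (gauss_density h w * Gamma_c V \<gamma> c x (y + sqrt (2 * \<gamma>) *\<^sub>R w) ^ l) \<partial>lborel)
        \<le> ennreal (Gamma_c V \<gamma> c x y ^ l + C * (\<Sum>i<l. h ^ (l - i) * Gamma_c V \<gamma> c x y ^ i))"
    using gauss_density_Gamma_c_shift_bound[where s = "sqrt (2 * \<gamma>)" and l = l,
        OF gamma_pos \<open>c \<ge> 1\<close> A1a V_meas std_brownian_motion_gauss_density_normalized[OF BM]]
    by blast
  define F where "F = (\<lambda>(x, p). (x + \<delta> *\<^sub>R p, (1 - \<gamma> * \<delta>) *\<^sub>R p - \<delta> *\<^sub>R gV x))"
  have F_meas: "F \<in> borel_measurable borel"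
    unfolding F_def borel_prod[symmetric] using gV_meas by measurable
  have Gamma_meas: "(\<lambda>(x, y). Gamma_c V \<gamma> c x y) \<in> borel_measurable borel"
    unfolding Gamma_c_def borel_prod[symmetric] using V_meas by measurable
  have Gamma_nonneg: "0 \<le> Gamma_c V \<gamma> c x y" for x y
    using Gamma_c_ge_1[OF gamma_pos \<open>c \<ge> 1\<close> A1a] by (rule order_trans[OF zero_le_one])
  show ?thesis
    using \<open>C > 0\<close> ula_shifted_power_nn_integral_le[OF BM gV_meas S(1) _ F_meas Gamma_meas Gamma_nonneg
        less_imp_le[OF \<open>C > 0\<close>] gauss]
    by (intro exI[of _ C]) (simp add: Let_def c_def F_def split_beta)
qed

end
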